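(* Let $\varphi:G\to T$ be a hyperelliptic morphism of weighted graphs, where $G$ has genus $g$. Then the ramification divisor of $\varphi$ is $$\mathrm{Ram}\,\varphi=\sum_{v\in V(G),\ d_\varphi(v)=2}\big[2g(v)+2-\mathrm{val}_{C_\varphi}(v)\big]\,v .$$ If $G$ and $T$ have no legs, then $\deg\mathrm{Ram}\,\varphi=2g+2$.
   Context: Graphs with legs, weighted graphs, $T_vG$, $\mathrm{val}(v)$, $\chi(v)=2-2g(v)-\mathrm{val}(v)$, and harmonic morphisms $\varphi:G\to T$ with degree function $d_\varphi$ on vertices and half-edges are as usual (a map on vertices and half-edges commuting with root and involution maps, with $d_\varphi(v)=\sum_{h'\in T_vG,\varphi(h')=h}d_\varphi(h')$ for every $h\in T_{\varphi(v)}T$); finite means $d_\varphi>0$ on all half-edges. The ramification degree at $v$ is $\mathrm{Ram}_\varphi(v)=d_\varphi(v)\chi(\varphi(v))-\chi(v)$ and $\mathrm{Ram}\,\varphi=\sum_v\mathrm{Ram}_\varphi(v)v$. A hyperelliptic morphism is a finite harmonic morphism $\varphi:G\to T$ of degree $2$ onto a weighted graph $T$ of genus $0$ such that $d_\varphi(v)=2$ for every vertex $v$ of $G$ with $g(v)>0$. The dilation subgraph $C_\varphi$ consists of the vertices and half-edges of $G$ on which $d_\varphi=2$ (equivalently, of $T$ having exactly one preimage); $\mathrm{val}_{C_\varphi}(v)$ is the number of half-edges rooted at $v$ on which $d_\varphi=2$. *)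

theory Defs
  imports Main
begin

text \<open>A finite weighted graph with legs: vertices, half-edges, root map,
involution on half-edges (fixed points are legs), and a vertex weight (genus).\<close>

record ('v, 'h) wgraph =
  verts :: "'v set"
  halfs :: "'h set"
  root  :: "'h \<Rightarrow> 'v"
  invo  :: "'h \<Rightarrow> 'h"
  wt    :: "'v \<Rightarrow> nat"

definition adjacent :: "('v, 'h) wgraph \<Rightarrow> 'v \<Rightarrow> 'v \<Rightarrow> bool" where
  "adjacent G v w \<longleftrightarrow> (\<exists>h\<in>halfs G. root G h = v \<and> root G (invo G h) = w)"

definition wf_graph :: "('v, 'h) wgraph \<Rightarrow> bool" where
  "wf_graph G \<longleftrightarrow> finite (verts G) \<and> finite (halfs G) \<and> verts G \<noteq> {}
     \<and> (\<forall>h\<in>halfs G. root G h \<in> verts G \<and> invo G h \<in> halfs G \<and> invo G (invo G h) = h)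
     \<and> (\<forall>v\<in>verts G. \<forall>w\<in>verts G. (adjacent G)\<^sup>*\<^sup>* v w)"

definition legs :: "('v, 'h) wgraph \<Rightarrow> 'h set" where
  "legs G = {h \<in> halfs G. invo G h = h}"

definition edges :: "('v, 'h) wgraph \<Rightarrow> 'h set set" where
  "edges G = {{h, invo G h} | h. h \<in> halfs G \<and> invo G h \<noteq> h}"

text \<open>Genus of a (connected) weighted graph: first Betti number plus total weight.\<close>
definition genus :: "('v, 'h) wgraph \<Rightarrow> int" where
  "genus G = int (card (edges G)) - int (card (verts G)) + 1 + (\<Sum>v\<in>verts G. int (wt G v))"

definition tangent :: "('v, 'h) wgraph \<Rightarrow> 'v \<Rightarrow> 'h set" where
  "tangent G v = {h \<in> halfs G. root G h = v}"

definition val :: "('v, 'h) wgraph \<Rightarrow> 'v \<Rightarrow> nat" where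
  "val G v = card (tangent G v)"

definition chi :: "('v, 'h) wgraph \<Rightarrow> 'v \<Rightarrow> int" where
  "chi G v = 2 - 2 * int (wt G v) - int (val G v)"

definition harmonic ::
  "('v, 'h) wgraph \<Rightarrow> ('w, 'k) wgraph \<Rightarrow> ('v \<Rightarrow> 'w) \<Rightarrow> ('h \<Rightarrow> 'k)
   \<Rightarrow> ('v \<Rightarrow> nat) \<Rightarrow> ('h \<Rightarrow> nat) \<Rightarrow> bool" where
  "harmonic G T fv fh dv dh \<longleftrightarrow> wf_graph G \<and> wf_graph T
     \<and> fv ` verts G \<subseteq> verts T \<and> fh ` halfs G \<subseteq> halfs T
     \<and> (\<forall>h\<in>halfs G. root T (fh h) = fv (root G h))
     \<and> (\<forall>h\<in>halfs G. invo T (fh h) = fh (invo G h))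
     \<and> (\<forall>h\<in>halfs G. dh (invo G h) = dh h)
     \<and> (\<forall>v\<in>verts G. \<forall>h\<in>tangent T (fv v).
          dv v = (\<Sum>h'\<in>{h' \<in> tangent G v. fh h' = h}. dh h'))"

definition finite_morph :: "('v, 'h) wgraph \<Rightarrow> ('h \<Rightarrow> nat) \<Rightarrow> bool" where
  "finite_morph G dh \<longleftrightarrow> (\<forall>h\<in>halfs G. dh h > 0)"

definition morph_degree_is ::
  "('v, 'h) wgraph \<Rightarrow> ('w, 'k) wgraph \<Rightarrow> ('v \<Rightarrow> 'w) \<Rightarrow> ('v \<Rightarrow> nat) \<Rightarrow> nat \<Rightarrow> bool" where
  "morph_degree_is G T fv dv n \<longleftrightarrow>
     (\<forall>w\<in>verts T. (\<Sum>v\<in>{v \<in> verts G. fv v = w}. dv v) = n)"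

definition hyperelliptic ::
  "('v, 'h) wgraph \<Rightarrow> ('w, 'k) wgraph \<Rightarrow> ('v \<Rightarrow> 'w) \<Rightarrow> ('h \<Rightarrow> 'k)
   \<Rightarrow> ('v \<Rightarrow> nat) \<Rightarrow> ('h \<Rightarrow> nat) \<Rightarrow> bool" where
  "hyperelliptic G T fv fh dv dh \<longleftrightarrow> harmonic G T fv fh dv dh \<and> finite_morph G dh
     \<and> morph_degree_is G T fv dv 2 \<and> genus T = 0
     \<and> (\<forall>v\<in>verts G. wt G v > 0 \<longrightarrow> dv v = 2)"

text \<open>Ramification degree at v (the coefficient of v in Ram).\<close>
definition ram ::
  "('v, 'h) wgraph \<Rightarrow> ('w, 'k) wgraph \<Rightarrow> ('v \<Rightarrow> 'w) \<Rightarrow> ('v \<Rightarrow> nat) \<Rightarrow> 'v \<Rightarrow> int" where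
  "ram G T fv dv v = int (dv v) * chi T (fv v) - chi G v"

text \<open>Valence of v in the dilation subgraph.\<close>
definition val_dil :: "('v, 'h) wgraph \<Rightarrow> ('h \<Rightarrow> nat) \<Rightarrow> 'v \<Rightarrow> nat" where
  "val_dil G dh v = card {h \<in> tangent G v. dh h = 2}"

end

theory Submission
  imports Defs
begin

text \<open>Since a connected graph has at least as many edges as vertices minus one, a genus 0
  target carries no weights. At a vertex \<open>v\<close> of \<open>G\<close>, harmonicity splits the half-edges at
  \<open>v\<close> into fibres over the half-edges at \<open>\<phi>(v)\<close>, each of total degree \<open>d(v) \<le> 2\<close>; counting
  the half-edges of degree 2 twice gives \<open>val(v) + val\<^sub>C(v) = d(v) val(\<phi>(v))\<close>. Substituting
  into \<open>Ram(v) = d(v) (2 - val(\<phi>(v))) - (2 - 2g(v) - val(v))\<close> yields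
  \<open>2 d(v) - 2 + 2g(v) - val\<^sub>C(v)\<close>, which vanishes for \<open>d(v) = 1\<close>. For graphs without legs
  \<open>\<Sum> \<chi> = 2 - 2 genus\<close>, and summing \<open>Ram\<close> over the fibres gives Riemann-Hurwitz
  \<open>deg Ram = 2 (2 - 2 genus T) - (2 - 2g) = 2g + 2\<close>.\<close>

definition hop_dist :: "('v, 'h) wgraph \<Rightarrow> 'v \<Rightarrow> 'v \<Rightarrow> nat" where
  "hop_dist G r v = (LEAST n. (adjacent G ^^ n) r v)"

lemma hop_dist_parent:
  assumes wf: "wf_graph G" and r: "r \<in> verts G" and v: "v \<in> verts G" "v \<noteq> r"
  shows "\<exists>h\<in>halfs G. root G h = v \<and> Suc (hop_dist G r (root G (invo G h))) = hop_dist G r v"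
proof -
  have reach: "(adjacent G ^^ hop_dist G r u) r u" if "u \<in> verts G" for u
  proof -
    have "(adjacent G)\<^sup>*\<^sup>* r u" using wf r that by (auto simp: wf_graph_def)
    then show ?thesis unfolding hop_dist_def rtranclp_power by (rule LeastI_ex)
  qed
  have least: "hop_dist G r u \<le> n" if "(adjacent G ^^ n) r u" for u n
    using that unfolding hop_dist_def by (rule Least_le)
  obtain m where m: "hop_dist G r v = Suc m"
    using reach[OF v(1)] v(2) by (cases "hop_dist G r v") auto
  then obtain u where u: "(adjacent G ^^ m) r u" and uv: "adjacent G u v"
    using reach[OF v(1)] by (auto elim: relpowp_Suc_E)
  then obtain h where h: "h \<in> halfs G" "root G h = u" "root G (invo G h) = v"
    by (auto simp: adjacent_def)
  have hw: "root G h \<in> verts G" "invo G h \<in> halfs G" "invo G (invo G h) = h"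
    using wf h(1) by (auto simp: wf_graph_def)
  have "hop_dist G r v \<le> Suc (hop_dist G r u)"
    using relpowp_Suc_I[OF reach uv] hw(1) h(2) least by blast
  with least[OF u] m have "Suc (hop_dist G r u) = hop_dist G r v" by simp
  then show ?thesis using h hw by (intro bexI[of _ "invo G h"]) auto
qed

lemma finite_edges: "finite (halfs G) \<Longrightarrow> finite (edges G)"
  by (rule finite_subset[of _ "(\<lambda>h. {h, invo G h}) ` halfs G"]) (auto simp: edges_def)

text \<open>Every vertex other than a base point \<open>r\<close> is sent injectively to the edge through which
  it is first reached from \<open>r\<close>.\<close>

lemma card_verts_le_Suc_card_edges:
  assumes wf: "wf_graph G"
  shows "card (verts G) \<le> Suc (card (edges G))"
proof -
  obtain r where r: "r \<in> verts G" using wf by (auto simp: wf_graph_def)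
  obtain f where f: "\<And>v. v \<in> verts G - {r} \<Longrightarrow> f v \<in> halfs G \<and> root G (f v) = v
      \<and> Suc (hop_dist G r (root G (invo G (f v)))) = hop_dist G r v"
    using bchoice[of "verts G - {r}"] hop_dist_parent[OF wf r] by (metis DiffE singletonI)
  define e where "e v = {f v, invo G (f v)}" for v
  have inj: "inj_on e (verts G - {r})"
  proof (rule inj_onI)
    fix v w assume v: "v \<in> verts G - {r}" and w: "w \<in> verts G - {r}" and "e v = e w"
    then have "f v = f w \<or> (f v = invo G (f w) \<and> invo G (f v) = f w)"
      by (auto simp: e_def doubleton_eq_iff)
    then show "v = w"
    proof (elim disjE conjE)
      assume "f v = f w"
      then show "v = w" using f[OF v] f[OF w] by metis
    next
      assume "f v = invo G (f w)" "invo G (f v) = f w"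
      then have "Suc (hop_dist G r w) = hop_dist G r v" "Suc (hop_dist G r v) = hop_dist G r w"
        using f[OF v] f[OF w] by metis+
      then show "v = w" by simp
    qed
  qed
  have "e v \<in> edges G" if v: "v \<in> verts G - {r}" for v
  proof -
    have "invo G (f v) \<noteq> f v"
      using f[OF v] by auto
    then show ?thesis using f[OF v] unfolding e_def edges_def by blast
  qed
  then have "card (verts G - {r}) \<le> card (edges G)"
    using wf by (intro card_inj_on_le[OF inj] finite_edges) (auto simp: wf_graph_def)
  then show ?thesis using r by simp
qed

lemma wt_le_genus:
  assumes "wf_graph G" and "v \<in> verts G"
  shows "int (wt G v) \<le> genus G"
proof -
  have "int (wt G v) \<le> (\<Sum>u\<in>verts G. int (wt G u))"
    using assms by (intro member_le_sum) (auto simp: wf_graph_def)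
  then show ?thesis using card_verts_le_Suc_card_edges[OF assms(1)] by (simp add: genus_def)
qed

lemma sum_val_eq_card_halfs:
  assumes "wf_graph G"
  shows "(\<Sum>v\<in>verts G. val G v) = card (halfs G)"
proof -
  have "(\<Sum>v\<in>verts G. \<Sum>h\<in>{h \<in> halfs G. root G h = v}. 1) = (\<Sum>h\<in>halfs G. 1::nat)"
    using assms by (intro sum.group) (auto simp: wf_graph_def)
  then show ?thesis by (simp add: val_def tangent_def)
qed

lemma card_halfs_eq_twice_card_edges:
  assumes wf: "wf_graph G" and "legs G = {}"
  shows "card (halfs G) = 2 * card (edges G)"
proof -
  have inv: "invo G h \<in> halfs G \<and> invo G (invo G h) = h \<and> invo G h \<noteq> h" if "h \<in> halfs G" for h
    using wf assms(2) that by (auto simp: wf_graph_def legs_def)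
  have halfs_Union: "\<Union> (edges G) = halfs G"
    using inv by (auto simp: edges_def)
  have edge_eq: "e = {x, invo G x}" if "e \<in> edges G" "x \<in> e" for e x
    using that inv by (auto simp: edges_def)
  have "2 * card (edges G) = card (\<Union> (edges G))"
  proof (rule card_partition)
    show "finite (edges G)" "finite (\<Union> (edges G))"
      using wf finite_edges halfs_Union by (auto simp: wf_graph_def)
    show "card e = 2" if "e \<in> edges G" for e
      using that
      by (auto simp: edges_def)
    show "e \<inter> e' = {}" if "e \<in> edges G" "e' \<in> edges G" "e \<noteq> e'" for e e'
      using that edge_eq by blast
  qed
  then show ?thesis using halfs_Union by simp
qed

lemma sum_chi_eq:
  assumes "wf_graph G" and "legs G = {}"
  shows "(\<Sum>v\<in>verts G. chi G v) = 2 - 2 * genus G"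
proof -
  have "(\<Sum>v\<in>verts G. chi G v)
      = 2 * int (card (verts G)) - 2 * (\<Sum>v\<in>verts G. int (wt G v)) - int (\<Sum>v\<in>verts G. val G v)"
    by (simp add: chi_def sum_subtractf sum_distrib_left)
  also have "int (\<Sum>v\<in>verts G. val G v) = 2 * int (card (edges G))"
    by (simp only: sum_val_eq_card_halfs[OF assms(1)] card_halfs_eq_twice_card_edges[OF assms])
  finally show ?thesis by (simp add: genus_def)
qed

lemma harmonic_half_le_dv:
  assumes "harmonic G T fv fh dv dh" and "v \<in> verts G" and "h \<in> tangent G v"
  shows "dh h \<le> dv v"
proof -
  have "fh h \<in> tangent T (fv v)"
    using assms by (auto simp: harmonic_def tangent_def)
  then have "dv v = (\<Sum>h'\<in>{h' \<in> tangent G v. fh h' = fh h}. dh h')"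
    using assms(1,2) by (auto simp: harmonic_def)
  also have "dh h \<le> \<dots>"
    using assms by (intro member_le_sum) (auto simp: harmonic_def wf_graph_def tangent_def)
  finally show ?thesis .
qed

lemma harmonic_sum_tangent:
  assumes "harmonic G T fv fh dv dh" and "v \<in> verts G"
  shows "(\<Sum>h\<in>tangent G v. dh h) = dv v * val T (fv v)"
proof -
  have fin: "finite (tangent G v)" "finite (tangent T (fv v))"
    using assms(1) by (auto simp: harmonic_def wf_graph_def tangent_def)
  have "fh ` tangent G v \<subseteq> tangent T (fv v)"
    using assms(1) by (auto simp: harmonic_def tangent_def)
  then have "(\<Sum>h\<in>tangent G v. dh h)
      = (\<Sum>k\<in>tangent T (fv v). \<Sum>h\<in>{h \<in> tangent G v. fh h = k}. dh h)"
    using fin by (intro sum.group[symmetric])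
  also have "\<dots> = (\<Sum>k\<in>tangent T (fv v). dv v)"
    using assms by (intro sum.cong) (auto simp: harmonic_def)
  finally show ?thesis by (simp add: val_def)
qed

lemma sum_eq_card_add_card_eq_2:
  fixes c :: "'a \<Rightarrow> nat"
  assumes "finite S" and "\<And>x. x \<in> S \<Longrightarrow> c x \<in> {1, 2}"
  shows "(\<Sum>x\<in>S. c x) = card S + card {x \<in> S. c x = 2}"
proof -
  have "(\<Sum>x\<in>S. c x) = (\<Sum>x\<in>S. 1 + (if c x = 2 then 1 else 0))"
    using assms(2) by (intro sum.cong) auto
  also have "\<dots> = card S + card {x \<in> S. c x = 2}"
    using assms(1) by (simp only: sum.distrib) (simp add: sum.inter_filter[symmetric])
  finally show ?thesis .
qed

lemma val_add_val_dil:
  assumes "harmonic G T fv fh dv dh" and "finite_morph G dh"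
    and "v \<in> verts G" and "dv v \<le> 2"
  shows "val G v + val_dil G dh v = dv v * val T (fv v)"
proof -
  have "dh h \<in> {1, 2}" if "h \<in> tangent G v" for h
    using harmonic_half_le_dv[OF assms(1,3) that] assms(2,4) that
    by (fastforce simp: finite_morph_def tangent_def)
  then have "(\<Sum>h\<in>tangent G v. dh h) = val G v + val_dil G dh v"
    using assms(1) unfolding val_def val_dil_def
    by (intro sum_eq_card_add_card_eq_2) (auto simp: harmonic_def wf_graph_def tangent_def)
  then show ?thesis using harmonic_sum_tangent[OF assms(1,3)] by simp
qed

lemma val_dil_eq_0:
  assumes "harmonic G T fv fh dv dh" and "v \<in> verts G" and "dv v < 2"
  shows "val_dil G dh v = 0"
proof -
  have "{h \<in> tangent G v. dh h = 2} = {}"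
    using harmonic_half_le_dv[OF assms(1,2)] assms(3) by fastforce
  then show ?thesis unfolding val_dil_def by (simp only: card.empty)
qed

lemma verts_eq_singleton_if_tangent_empty:
  assumes "wf_graph G" and "v \<in> verts G" and "tangent G v = {}"
  shows "verts G = {v}"
proof -
  have "u = v" if "u \<in> verts G" for u
  proof -
    have "(adjacent G)\<^sup>*\<^sup>* v u"
      using assms(1,2) that by (auto simp: wf_graph_def)
    then show ?thesis
    proof (cases rule: converse_rtranclpE)
      case (step w)
      then have "tangent G v \<noteq> {}"
        by (auto simp: adjacent_def tangent_def)
      then show ?thesis using assms(3) by contradiction
    qed simp
  qed
  then show ?thesis using assms(2) by blast
qed

lemma dv_le_degree:
  assumes "harmonic G T fv fh dv dh" and "morph_degree_is G T fv dv n" and "v \<in> verts G"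
  shows "dv v \<le> n"
proof -
  have "dv v \<le> (\<Sum>u\<in>{u \<in> verts G. fv u = fv v}. dv u)"
    using assms(1,3) by (intro member_le_sum) (auto simp: harmonic_def wf_graph_def)
  also have "\<dots> = n"
    using assms by (auto simp: harmonic_def morph_degree_is_def)
  finally show ?thesis .
qed

lemma dv_pos:
  assumes "harmonic G T fv fh dv dh" and "finite_morph G dh" and "morph_degree_is G T fv dv n"
    and "0 < n" and "v \<in> verts G"
  shows "0 < dv v"
proof (cases "tangent G v = {}")
  case True
  then have "verts G = {v}"
    using verts_eq_singleton_if_tangent_empty[OF _ assms(5)] assms(1) by (simp add: harmonic_def)
  then have "{u \<in> verts G. fv u = fv v} = {v}"
    by auto
  moreover have "fv v \<in> verts T"
    using assms(1,5) by (auto simp: harmonic_def)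
  ultimately have "dv v = n"
    using assms(3) by (force simp: morph_degree_is_def)
  then show ?thesis using assms(4) by simp
next
  case False
  then obtain h where "h \<in> tangent G v" by blast
  then show ?thesis
    using harmonic_half_le_dv[OF assms(1,5)] assms(2)
    by (fastforce simp: finite_morph_def tangent_def)
qed

lemma ram_eq_if_dv_le_2:
  assumes "harmonic G T fv fh dv dh" and "finite_morph G dh"
    and "v \<in> verts G" and "dv v \<le> 2" and "wt T (fv v) = 0"
  shows "ram G T fv dv v = 2 * int (dv v) - 2 + 2 * int (wt G v) - int (val_dil G dh v)"
proof -
  have "int (val G v) + int (val_dil G dh v) = int (dv v) * int (val T (fv v))"
    using val_add_val_dil[OF assms(1-4)] by (simp flip: of_nat_add of_nat_mult)
  then show ?thesis
    using assms(5) by (simp add: ram_def chi_def algebra_simps)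
qed

lemma sum_over_fibres:
  assumes "harmonic G T fv fh dv dh" and "morph_degree_is G T fv dv n"
  shows "(\<Sum>v\<in>verts G. of_nat (dv v) * f (fv v)) = of_nat n * (\<Sum>w\<in>verts T. f w)"
proof -
  have fin: "finite (verts G)" "finite (verts T)" and img: "fv ` verts G \<subseteq> verts T"
    using assms(1) by (auto simp: harmonic_def wf_graph_def)
  have "(\<Sum>v\<in>verts G. of_nat (dv v) * f (fv v))
      = (\<Sum>w\<in>verts T. \<Sum>v\<in>{v \<in> verts G. fv v = w}. of_nat (dv v) * f (fv v))"
    by (rule sum.group[OF fin img, symmetric])
  also have "\<dots> = (\<Sum>w\<in>verts T. \<Sum>v\<in>{v \<in> verts G. fv v = w}. of_nat (dv v) * f w)"
    by (intro sum.cong) auto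
  also have "\<dots> = (\<Sum>w\<in>verts T. of_nat n * f w)"
    using assms(2)
    by (intro sum.cong) (auto simp: morph_degree_is_def sum_distrib_right[symmetric] simp flip: of_nat_sum)
  finally show ?thesis by (simp add: sum_distrib_left)
qed

theorem riemann_hurwitz:
  assumes "harmonic G T fv fh dv dh" and "morph_degree_is G T fv dv n"
    and "legs G = {}" and "legs T = {}"
  shows "(\<Sum>v\<in>verts G. ram G T fv dv v) = int n * (2 - 2 * genus T) - (2 - 2 * genus G)"
proof -
  have wf: "wf_graph G" "wf_graph T"
    using assms(1) by (auto simp: harmonic_def)
  have "(\<Sum>v\<in>verts G. ram G T fv dv v)
      = (\<Sum>v\<in>verts G. int (dv v) * chi T (fv v)) - (\<Sum>v\<in>verts G. chi G v)"
    by (simp add: ram_def sum_subtractf)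
  also have "\<dots> = int n * (\<Sum>w\<in>verts T. chi T w) - (\<Sum>v\<in>verts G. chi G v)"
    using sum_over_fibres[OF assms(1,2)] by simp
  finally show ?thesis
    using sum_chi_eq[OF wf(1) assms(3)] sum_chi_eq[OF wf(2) assms(4)] by simp
qed

lemma ram_hyperelliptic:
  assumes hyp: "hyperelliptic G T fv fh dv dh" and v: "v \<in> verts G"
  shows "ram G T fv dv v = (if dv v = 2 then 2 * int (wt G v) + 2 - int (val_dil G dh v) else 0)"
proof -
  have harm: "harmonic G T fv fh dv dh" and fin: "finite_morph G dh"
    and deg: "morph_degree_is G T fv dv 2"
    using hyp by (auto simp: hyperelliptic_def)
  have "fv v \<in> verts T" and "wf_graph T"
    using harm v by (auto simp: harmonic_def)
  then have "wt T (fv v) = 0"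
    using wt_le_genus hyp by (force simp: hyperelliptic_def)
  then have ram: "ram G T fv dv v = 2 * int (dv v) - 2 + 2 * int (wt G v) - int (val_dil G dh v)"
    using ram_eq_if_dv_le_2[OF harm fin v] dv_le_degree[OF harm deg v] by simp
  consider "dv v = 1" | "dv v = 2"
    using dv_le_degree[OF harm deg v] dv_pos[OF harm fin deg _ v] by fastforce
  then show ?thesis
  proof cases
    case 1
    then have "wt G v = 0"
      using hyp v by (auto simp: hyperelliptic_def)
    then show ?thesis using ram 1 val_dil_eq_0[OF harm v] by simp
  qed (use ram in simp)
qed

theorem proposition5p13:
  fixes G :: "('v, 'h) wgraph" and T :: "('w, 'k) wgraph"
    and fv :: "'v \<Rightarrow> 'w" and fh :: "'h \<Rightarrow> 'k"
    and dv :: "'v \<Rightarrow> nat" and dh :: "'h \<Rightarrow> nat"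
  assumes "hyperelliptic G T fv fh dv dh"
  shows "(\<forall>v\<in>verts G. ram G T fv dv v =
            (if dv v = 2 then 2 * int (wt G v) + 2 - int (val_dil G dh v) else 0))
       \<and> (legs G = {} \<and> legs T = {} \<longrightarrow>
            (\<Sum>v\<in>verts G. ram G T fv dv v) = 2 * genus G + 2)"
proof (intro conjI ballI impI)
  show "ram G T fv dv v = (if dv v = 2 then 2 * int (wt G v) + 2 - int (val_dil G dh v) else 0)"
    if "v \<in> verts G" for v
    using ram_hyperelliptic[OF assms that] .
  show "(\<Sum>v\<in>verts G. ram G T fv dv v) = 2 * genus G + 2" if "legs G = {} \<and> legs T = {}"
    using riemann_hurwitz[of G T fv fh dv dh 2] assms that by (simp add: hyperelliptic_def)
qed

end
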